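(* Let $p\geq 2$ and let $T$ be the (geometric realization of the) regular rooted tree in which the root has valence $p$ and every other vertex has valence $p+1$, equipped with its usual topology. Let $\mathcal{D}_T$ be the embedded wire diffeology on $T$. Then the D-topology of the diffeological space $(T,\mathcal{D}_T)$ coincides with the usual topology of $T$.
   Context: Fix a finite alphabet $A$ with $|A|=p\geq 2$. The vertices of $T$ are the finite words over $A$ (the root is the empty word); two vertices are joined by an edge iff they have the form $a_1\dots a_n$ and $a_1\dots a_na_{n+1}$. As a topological space, $T$ is the 1-dimensional CW complex obtained by realizing each edge as a copy of $[0,1]$ glued at its endpoint vertices, with its usual (CW) topology. A diffeology on a set $X$ is a collection of maps $U\to X$ ("plots"), $U$ ranging over open subsets of all $\mathbb{R}^n$, containing all constant maps, closed under precomposition with smooth maps between open subsets of Euclidean spaces, and satisfying the sheaf condition (a map that is locally a plot is a plot). The diffeology generated by a set $\mathcal{A}$ of maps into $X$ is the smallest diffeology containing $\mathcal{A}$; its plots are the maps $f:V\to X$ such that $V$ has an open cover on each member of which $f$ is either constant or factors as $g\circ h$ with $g\in\mathcal{A}$ and $h$ smooth. The embedded wire diffeology $\mathcal{D}_T$ is the diffeology on $T$ generated by all maps $\gamma:\mathbb{R}\to T$ that are injective, continuous, and homeomorphisms onto their images. The D-topology of a diffeological space $X$ is the topology in which $S\subseteq X$ is open iff $P^{-1}(S)$ is open for every plot $P$ of $X$. *)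

theory Defs
  imports "HOL-Analysis.Analysis"
begin

text \<open>Points of T are encoded as pairs (v, s).  For a nonempty
word v over A and 0 < s <= 1, (v, s) is the point of the edge joining butlast v to v at
parameter s, measured from butlast v; (v, 1) is the vertex v itself.\<close>

definition Tcar :: "'a set \<Rightarrow> ('a list \<times> real) set" where
  "Tcar A = {([], 0)} \<union> {(v, s). v \<noteq> [] \<and> set v \<subseteq> A \<and> 0 < s \<and> s \<le> 1}"

definition vert :: "'a list \<Rightarrow> 'a list \<times> real" where
  "vert w = (if w = [] then ([], 0) else (w, 1))"

definition edge_map :: "'a list \<Rightarrow> real \<Rightarrow> 'a list \<times> real" where
  "edge_map v s = (if s = 0 then vert (butlast v) else (v, s))"

text \<open>The usual (CW / weak) topology: U is open iff its preimage under every
characteristic edge map is open in [0,1].\<close>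
definition Ttop :: "'a set \<Rightarrow> ('a list \<times> real) topology" where
  "Ttop A = topology (\<lambda>U. U \<subseteq> Tcar A \<and>
      (\<forall>v. v \<noteq> [] \<and> set v \<subseteq> A \<longrightarrow>
         openin (top_of_set {0..1}) {s \<in> {0..1}. edge_map v s \<in> U}))"

text \<open>R^n is encoded as the functions nat => real vanishing from index n on, with the
topology induced by the product topology (which is the Euclidean one).\<close>
definition Rn :: "nat \<Rightarrow> (nat \<Rightarrow> real) set" where
  "Rn n = {x. \<forall>i\<ge>n. x i = 0}"

definition pdiff :: "nat \<Rightarrow> ((nat \<Rightarrow> real) \<Rightarrow> real) \<Rightarrow> (nat \<Rightarrow> real) \<Rightarrow> real" where
  "pdiff i h x = deriv (\<lambda>t. h (x(i := x i + t))) 0"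

definition smooth_on :: "nat \<Rightarrow> (nat \<Rightarrow> real) set \<Rightarrow> ((nat \<Rightarrow> real) \<Rightarrow> real) \<Rightarrow> bool" where
  "smooth_on n U h \<longleftrightarrow>
     (\<forall>is. set is \<subseteq> {..<n} \<longrightarrow>
        continuous_on U (foldr pdiff is h) \<and>
        (\<forall>i<n. \<forall>x\<in>U. (\<lambda>t. foldr pdiff is h (x(i := x i + t))) differentiable (at 0)))"

definition embedded_wire :: "'a set \<Rightarrow> (real \<Rightarrow> 'a list \<times> real) \<Rightarrow> bool" where
  "embedded_wire A \<gamma> \<longleftrightarrow> inj \<gamma> \<and> continuous_map euclideanreal (Ttop A) \<gamma> \<and>
     homeomorphic_map euclideanreal (subtopology (Ttop A) (range \<gamma>)) \<gamma>"

text \<open>Plots of the diffeology generated by the embedded wires, with domain V open in R^n.\<close>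
definition wire_plot :: "'a set \<Rightarrow> nat \<Rightarrow> (nat \<Rightarrow> real) set \<Rightarrow> ((nat \<Rightarrow> real) \<Rightarrow> 'a list \<times> real) \<Rightarrow> bool" where
  "wire_plot A n V P \<longleftrightarrow> openin (top_of_set (Rn n)) V \<and> P ` V \<subseteq> Tcar A \<and>
     (\<forall>x\<in>V. \<exists>W. openin (top_of_set (Rn n)) W \<and> x \<in> W \<and> W \<subseteq> V \<and>
        ((\<exists>c. \<forall>y\<in>W. P y = c) \<or>
         (\<exists>\<gamma> h. embedded_wire A \<gamma> \<and> smooth_on n W h \<and> (\<forall>y\<in>W. P y = \<gamma> (h y)))))"

definition D_open :: "'a set \<Rightarrow> ('a list \<times> real) set \<Rightarrow> bool" where
  "D_open A S \<longleftrightarrow> S \<subseteq> Tcar A \<and>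
     (\<forall>n V P. wire_plot A n V P \<longrightarrow> openin (top_of_set (Rn n)) {x \<in> V. P x \<in> S})"

definition D_topology :: "'a set \<Rightarrow> ('a list \<times> real) topology" where
  "D_topology A = topology (D_open A)"

end

theory Submission
  imports Defs "HOL-Library.Sublist"
begin

text \<open>Open sets of the usual topology are D-open because every plot is locally either constant
  or a continuous map followed by a continuous wire.  Conversely, let \<open>S\<close> be D-open.  The
  preimage of \<open>S\<close> under a wire is open, since a wire is a plot on \<open>\<real>\<close>.  Every point of an edge
  lies in the interior of an embedded arc running along two adjacent edges: through the upper
  end of an edge into one of its children, or, at the root, from one child edge to another
  (this is where \<open>p \<ge> 2\<close> is needed).  Such an arc, reparametrized by a homeomorphism
  \<open>\<real> \<cong> (-1,1)\<close>, is a wire, because it admits a continuous retraction \<open>T \<rightarrow> \<real>\<close> onto its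
  parameter; hence the preimage of \<open>S\<close> under each edge map is open.\<close>

lemma istopology_Ttop: "istopology (\<lambda>U. U \<subseteq> Tcar A \<and>
      (\<forall>v. v \<noteq> [] \<and> set v \<subseteq> A \<longrightarrow>
         openin (top_of_set {0..1}) {s \<in> {0..1}. edge_map v s \<in> U}))"
  unfolding istopology_def
proof (rule conjI; intro allI impI)
  fix S T :: "('a list \<times> real) set"
  assume S: "S \<subseteq> Tcar A \<and> (\<forall>v. v \<noteq> [] \<and> set v \<subseteq> A \<longrightarrow>
         openin (top_of_set {0..1}) {s \<in> {0..1}. edge_map v s \<in> S})"
    and T: "T \<subseteq> Tcar A \<and> (\<forall>v. v \<noteq> [] \<and> set v \<subseteq> A \<longrightarrow>
         openin (top_of_set {0..1}) {s \<in> {0..1}. edge_map v s \<in> T})"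
  show "S \<inter> T \<subseteq> Tcar A \<and> (\<forall>v. v \<noteq> [] \<and> set v \<subseteq> A \<longrightarrow>
         openin (top_of_set {0..1}) {s \<in> {0..1}. edge_map v s \<in> S \<inter> T})"
  proof (intro conjI allI impI)
    show "S \<inter> T \<subseteq> Tcar A" using S by blast
    fix v :: "'a list" assume v: "v \<noteq> [] \<and> set v \<subseteq> A"
    have "{s \<in> {0..1}. edge_map v s \<in> S \<inter> T} = {s \<in> {0..1}. edge_map v s \<in> S} \<inter> {s \<in> {0..1}. edge_map v s \<in> T}"
      by blast
    then show "openin (top_of_set {0..1}) {s \<in> {0..1}. edge_map v s \<in> S \<inter> T}"
      using S T v by (metis (no_types, lifting) openin_Int)
  qed
next
  fix K :: "('a list \<times> real) set set"
  assume K: "\<forall>S\<in>K. S \<subseteq> Tcar A \<and> (\<forall>v. v \<noteq> [] \<and> set v \<subseteq> A \<longrightarrow>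
         openin (top_of_set {0..1}) {s \<in> {0..1}. edge_map v s \<in> S})"
  show "\<Union>K \<subseteq> Tcar A \<and> (\<forall>v. v \<noteq> [] \<and> set v \<subseteq> A \<longrightarrow>
         openin (top_of_set {0..1}) {s \<in> {0..1}. edge_map v s \<in> \<Union>K})"
  proof (intro conjI allI impI)
    show "\<Union>K \<subseteq> Tcar A" using K by blast
    fix v :: "'a list" assume v: "v \<noteq> [] \<and> set v \<subseteq> A"
    have "{s \<in> {0..1}. edge_map v s \<in> \<Union>K} = \<Union>((\<lambda>S. {s \<in> {0..1}. edge_map v s \<in> S}) ` K)"
      by blast
    then show "openin (top_of_set {0..1}) {s \<in> {0..1}. edge_map v s \<in> \<Union>K}"
      using K v by (auto intro!: openin_Union)
  qed
qed

lemma openin_Ttop: "openin (Ttop A) U \<longleftrightarrow> U \<subseteq> Tcar A \<and>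
      (\<forall>v. v \<noteq> [] \<and> set v \<subseteq> A \<longrightarrow>
         openin (top_of_set {0..1}) {s \<in> {0..1}. edge_map v s \<in> U})"
  unfolding Ttop_def using istopology_Ttop[of A] by simp

lemma edge_map_in_Tcar: "v \<noteq> [] \<Longrightarrow> set v \<subseteq> A \<Longrightarrow> 0 \<le> s \<Longrightarrow> s \<le> 1 \<Longrightarrow> edge_map v s \<in> Tcar A"
  by (auto simp: edge_map_def vert_def Tcar_def dest: in_set_butlastD)

lemma topspace_Ttop: "topspace (Ttop A) = Tcar A"
proof
  show "topspace (Ttop A) \<subseteq> Tcar A"
    unfolding topspace_def using openin_Ttop by blast
  have "{s \<in> {0..1}. edge_map v s \<in> Tcar A} = {0..1}" if "v \<noteq> []" "set v \<subseteq> A" for v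
    using edge_map_in_Tcar that by auto
  then have "openin (Ttop A) (Tcar A)"
    by (simp add: openin_Ttop)
  then show "Tcar A \<subseteq> topspace (Ttop A)"
    by (rule openin_subset)
qed

lemma continuous_map_edge_map:
  "v \<noteq> [] \<Longrightarrow> set v \<subseteq> A \<Longrightarrow> continuous_map (top_of_set {0..1}) (Ttop A) (edge_map v)"
  using edge_map_in_Tcar by (auto simp: continuous_map_def topspace_Ttop openin_Ttop)

text \<open>The pair \<open>(u @ [c], 0)\<close> is not a point of the tree: \<open>vertex\<close> says that \<open>r\<close>, continued along
  the edge \<open>u @ [c]\<close> down to its lower end, takes the value of \<open>r\<close> at the vertex \<open>u\<close>.\<close>

lemma continuous_map_Ttop_real:
  assumes edge: "\<And>v. continuous_on {0..1} (\<lambda>s. r (v, s))"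
    and vertex: "\<And>u c. r (vert u) = r (u @ [c], 0)"
  shows "continuous_map (Ttop A) euclideanreal r"
  unfolding continuous_map_def
proof (intro conjI allI impI)
  fix U :: "real set"
  assume "openin euclideanreal U"
  then have U: "open U" by simp
  have "openin (top_of_set {0..1}) {s \<in> {0..1}. edge_map v s \<in> {x \<in> Tcar A. r x \<in> U}}"
    if v: "v \<noteq> []" "set v \<subseteq> A" for v
  proof -
    have "r (edge_map v s) = r (v, s)" for s
      using vertex[of "butlast v" "last v"] v(1) by (simp add: edge_map_def)
    then have "{s \<in> {0..1}. edge_map v s \<in> {x \<in> Tcar A. r x \<in> U}} =
        {0..1} \<inter> (\<lambda>s. r (v, s)) -` U"
      using edge_map_in_Tcar[OF v] by auto
    then show ?thesis
      using continuous_openin_preimage_gen[OF edge U] by simp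
  qed
  then show "openin (Ttop A) {x \<in> topspace (Ttop A). r x \<in> U}"
    by (simp add: openin_Ttop topspace_Ttop)
qed auto

lemma istopology_D_open: "istopology (D_open A)"
  unfolding istopology_def
proof (intro conjI allI impI)
  fix S T assume S: "D_open A S" and T: "D_open A T"
  show "D_open A (S \<inter> T)" unfolding D_open_def
  proof (intro conjI allI impI)
    show "S \<inter> T \<subseteq> Tcar A" using S unfolding D_open_def by blast
    fix n V P assume P: "wire_plot A n V P"
    have "{x \<in> V. P x \<in> S \<inter> T} = {x \<in> V. P x \<in> S} \<inter> {x \<in> V. P x \<in> T}" by blast
    then show "openin (top_of_set (Rn n)) {x \<in> V. P x \<in> S \<inter> T}"
      using S T P unfolding D_open_def by (metis (no_types, lifting) openin_Int)
  qed
next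
  fix K assume K: "\<forall>S\<in>K. D_open A S"
  show "D_open A (\<Union>K)" unfolding D_open_def
  proof (intro conjI allI impI)
    show "\<Union>K \<subseteq> Tcar A" using K unfolding D_open_def by blast
    fix n V P assume P: "wire_plot A n V P"
    have "{x \<in> V. P x \<in> \<Union>K} = \<Union>((\<lambda>S. {x \<in> V. P x \<in> S}) ` K)" by blast
    then show "openin (top_of_set (Rn n)) {x \<in> V. P x \<in> \<Union>K}"
      using K P unfolding D_open_def by (auto intro!: openin_Union)
  qed
qed

lemma openin_D_topology: "openin (D_topology A) S \<longleftrightarrow> D_open A S"
  unfolding D_topology_def using istopology_D_open[of A] by simp

lemma smooth_on_imp_continuous_on: "smooth_on n W h \<Longrightarrow> continuous_on W h"
  unfolding smooth_on_def by (metis empty_subsetI foldr_Nil id_apply list.set(1))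

lemma openin_Ttop_imp_D_open:
  assumes U: "openin (Ttop A) U"
  shows "D_open A U"
  unfolding D_open_def
proof (intro conjI allI impI)
  show "U \<subseteq> Tcar A"
    using U openin_Ttop by blast
  fix n V P
  assume P: "wire_plot A n V P"
  show "openin (top_of_set (Rn n)) {x \<in> V. P x \<in> U}"
  proof (subst openin_subopen, intro ballI)
    fix x assume x: "x \<in> {x \<in> V. P x \<in> U}"
    then obtain W where W: "openin (top_of_set (Rn n)) W" "x \<in> W" "W \<subseteq> V"
      and local: "(\<exists>c. \<forall>y\<in>W. P y = c) \<or>
                  (\<exists>\<gamma> h. embedded_wire A \<gamma> \<and> smooth_on n W h \<and> (\<forall>y\<in>W. P y = \<gamma> (h y)))"
      using P unfolding wire_plot_def by blast
    from local show "\<exists>T. openin (top_of_set (Rn n)) T \<and> x \<in> T \<and> T \<subseteq> {x \<in> V. P x \<in> U}"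
    proof (elim disjE exE conjE)
      fix c assume "\<forall>y\<in>W. P y = c"
      then have "W \<subseteq> {x \<in> V. P x \<in> U}"
        using x W by auto
      with W show ?thesis by blast
    next
      fix \<gamma> h
      assume \<gamma>: "embedded_wire A \<gamma>" and h: "smooth_on n W h" and P_eq: "\<forall>y\<in>W. P y = \<gamma> (h y)"
      have "open {t. \<gamma> t \<in> U}"
        using \<gamma> openin_continuous_map_preimage[of euclideanreal "Ttop A" \<gamma> U] U
        by (simp add: embedded_wire_def)
      then have "openin (top_of_set W) (W \<inter> h -` {t. \<gamma> t \<in> U})"
        using continuous_openin_preimage_gen smooth_on_imp_continuous_on[OF h] by blast
      then have "openin (top_of_set (Rn n)) (W \<inter> h -` {t. \<gamma> t \<in> U})"
        using W(1) openin_trans by blast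
      with x W P_eq show ?thesis
        by (intro exI[of _ "W \<inter> h -` {t. \<gamma> t \<in> U}"]) auto
    qed
  qed
qed

lemma foldr_pdiff_coordinate0:
  "set is \<subseteq> {..<1} \<Longrightarrow> foldr pdiff is (\<lambda>x. x 0) \<in> {\<lambda>x. x 0, \<lambda>x. 1, \<lambda>x. 0}"
proof (induction "is")
  case (Cons i "is")
  have "pdiff 0 (\<lambda>x. x 0) x = 1" for x :: "nat \<Rightarrow> real"
    unfolding pdiff_def by (rule DERIV_imp_deriv) (auto intro!: derivative_eq_intros)
  with Cons show ?case
    by (auto simp: pdiff_def)
qed simp

lemma smooth_on_coordinate0: "smooth_on 1 W (\<lambda>x. x 0)"
  unfolding smooth_on_def
proof (intro allI impI conjI ballI)
  fix "is" :: "nat list" assume "set is \<subseteq> {..<1}"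
  then have F: "foldr pdiff is (\<lambda>x. x 0) \<in> {\<lambda>x. x 0, \<lambda>x. 1, \<lambda>x. 0}"
    by (rule foldr_pdiff_coordinate0)
  then show "continuous_on W (foldr pdiff is (\<lambda>x. x 0))"
    by (auto intro: continuous_on_subset[OF continuous_on_product_coordinates subset_UNIV])
  fix i x assume "i < (1::nat)"
  with F show "(\<lambda>t. foldr pdiff is (\<lambda>x. x 0) (x(i := x i + t))) differentiable at 0"
    by (auto intro!: derivative_intros)
qed

text \<open>Composed with the coordinate of \<open>\<real>\<^sup>1\<close>, a wire is a plot.\<close>

lemma open_vimage_embedded_wire:
  assumes S: "D_open A S" and \<gamma>: "embedded_wire A \<gamma>"
  shows "open {t. \<gamma> t \<in> S}"
proof -
  have "continuous_map euclideanreal (Ttop A) \<gamma>"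
    using \<gamma> by (simp add: embedded_wire_def)
  then have "\<gamma> t \<in> Tcar A" for t
    using continuous_map_image_subset_topspace by (fastforce simp: topspace_Ttop)
  then have "wire_plot A 1 (Rn 1) (\<lambda>x. \<gamma> (x 0))"
    unfolding wire_plot_def
  proof (intro conjI ballI)
    fix x assume "x \<in> Rn 1"
    then show "\<exists>W. openin (top_of_set (Rn 1)) W \<and> x \<in> W \<and> W \<subseteq> Rn 1 \<and>
             ((\<exists>c. \<forall>y\<in>W. \<gamma> (y 0) = c) \<or>
              (\<exists>\<gamma>' h. embedded_wire A \<gamma>' \<and> smooth_on 1 W h \<and> (\<forall>y\<in>W. \<gamma> (y 0) = \<gamma>' (h y))))"
      using \<gamma> smooth_on_coordinate0[of "Rn 1"]
      by (intro exI[of _ "Rn 1"] conjI disjI2 exI[of _ \<gamma>] exI[of _ "\<lambda>x. x 0"]) auto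
  qed auto
  then have "openin (top_of_set (Rn 1)) {x \<in> Rn 1. \<gamma> (x 0) \<in> S}"
    using S unfolding D_open_def by blast
  then obtain B where B: "open B" "{x \<in> Rn 1. \<gamma> (x 0) \<in> S} = Rn 1 \<inter> B"
    by (auto simp: openin_open)
  define e :: "real \<Rightarrow> nat \<Rightarrow> real" where "e t = (\<lambda>i. if i = 0 then t else 0)" for t
  have e: "e t \<in> Rn 1" "e t 0 = t" for t
    by (auto simp: e_def Rn_def)
  have "continuous_on UNIV (\<lambda>t. e t i)" for i
    by (cases "i = 0") (auto simp: e_def)
  then have "continuous_on UNIV e"
    by (rule continuous_on_coordinatewise_then_product)
  moreover have "\<gamma> t \<in> S \<longleftrightarrow> e t \<in> B" for t
    using B(2)[THEN eqset_imp_iff, of "e t"] e[of t] by simp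
  then have "{t. \<gamma> t \<in> S} = e -` B"
    by blast
  ultimately show ?thesis
    using B(1) continuous_on_open_vimage[of UNIV e] by simp
qed

section \<open>Arcs with a retraction are wires\<close>

definition squash :: "real \<Rightarrow> real" where "squash t = t / (1 + \<bar>t\<bar>)"

definition unsquash :: "real \<Rightarrow> real" where "unsquash u = u / (1 - \<bar>u\<bar>)"

lemma abs_squash_less_1: "\<bar>squash t\<bar> < 1"
  by (simp add: squash_def abs_divide)

lemma squash_unsquash: "\<bar>u\<bar> < 1 \<Longrightarrow> squash (unsquash u) = u"
  by (simp add: squash_def unsquash_def abs_divide divide_simps)

lemma unsquash_squash: "unsquash (squash t) = t"
proof -
  have "1 + \<bar>t\<bar> \<noteq> 0"
    by linarith
  then show ?thesis
    by (simp add: squash_def unsquash_def abs_divide divide_simps)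
qed

lemma continuous_on_squash: "continuous_on S squash"
  unfolding squash_def by (intro continuous_intros) (auto simp: add_pos_nonneg)

lemma continuous_on_unsquash: "continuous_on {-1<..<1} unsquash"
  unfolding unsquash_def by (intro continuous_intros) auto

definition retract_arc :: "'a set \<Rightarrow> (real \<Rightarrow> 'a list \<times> real) \<Rightarrow> bool" where
  "retract_arc A p \<longleftrightarrow> continuous_map (top_of_set {-1..1}) (Ttop A) p \<and>
     (\<exists>r. continuous_map (Ttop A) euclideanreal r \<and> (\<forall>u\<in>{-1<..<1}. r (p u) = u))"

lemma embedded_wire_retract_arc:
  assumes "retract_arc A p"
  shows "embedded_wire A (p \<circ> squash)"
proof -
  obtain r where p: "continuous_map (top_of_set {-1..1}) (Ttop A) p"
    and r: "continuous_map (Ttop A) euclideanreal r" and rp: "\<And>u. u \<in> {-1<..<1} \<Longrightarrow> r (p u) = u"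
    using assms unfolding retract_arc_def by blast
  have squash_in: "squash t \<in> {-1<..<1}" "squash t \<in> {-1..1}" for t
    using abs_squash_less_1[of t] by (auto simp: abs_less_iff)
  have r_wire: "r ((p \<circ> squash) t) = squash t" for t
    using rp squash_in by simp
  have cont: "continuous_map euclideanreal (Ttop A) (p \<circ> squash)"
    using squash_in continuous_on_squash
    by (intro continuous_map_compose[OF _ p] continuous_map_into_subtopology) auto
  have "continuous_map (subtopology (Ttop A) (range (p \<circ> squash))) (top_of_set {-1<..<1}) r"
    using squash_in r_wire
    by (intro continuous_map_into_subtopology continuous_map_from_subtopology[OF r]) auto
  then have "continuous_map (subtopology (Ttop A) (range (p \<circ> squash))) euclideanreal (unsquash \<circ> r)"
    by (rule continuous_map_compose) (simp add: continuous_on_unsquash)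
  with cont have "homeomorphic_map euclideanreal (subtopology (Ttop A) (range (p \<circ> squash))) (p \<circ> squash)"
    unfolding homeomorphic_map_maps homeomorphic_maps_def using r_wire unsquash_squash
    by (intro exI[of _ "unsquash \<circ> r"]) (auto simp: continuous_map_into_subtopology)
  moreover have "inj (p \<circ> squash)"
    by (metis injI r_wire unsquash_squash)
  ultimately show ?thesis
    using cont by (simp add: embedded_wire_def)
qed

lemma open_vimage_retract_arc:
  assumes S: "D_open A S" and p: "retract_arc A p"
  shows "open {u \<in> {-1<..<1}. p u \<in> S}"
proof -
  have "open (unsquash -` {t. (p \<circ> squash) t \<in> S} \<inter> {-1<..<1})"
    using continuous_on_open_vimage[of "{-1<..<1}" unsquash] continuous_on_unsquash
      open_vimage_embedded_wire[OF S embedded_wire_retract_arc[OF p]]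
    by (metis open_greaterThanLessThan)
  moreover have "unsquash -` {t. (p \<circ> squash) t \<in> S} \<inter> {-1<..<1} = {u \<in> {-1<..<1}. p u \<in> S}"
    by (auto simp: squash_unsquash abs_less_iff)
  ultimately show ?thesis
    by simp
qed

lemma openin_edge_vimage_along_arc:
  assumes S: "D_open A S" and p: "retract_arc A p"
    and along: "\<And>s. s \<in> {0..1} \<Longrightarrow> \<bar>s - c\<bar> < 1 \<Longrightarrow> p (s - c) = edge_map v s"
  shows "openin (top_of_set {0..1}) {s \<in> {0..1}. \<bar>s - c\<bar> < 1 \<and> edge_map v s \<in> S}"
proof -
  have "open ((\<lambda>s. s - c) -` {u \<in> {-1<..<1}. p u \<in> S})"
    using open_vimage_retract_arc[OF S p] by (intro continuous_open_vimage) (auto intro: continuous_intros)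
  moreover have "{s \<in> {0..1}. \<bar>s - c\<bar> < 1 \<and> edge_map v s \<in> S} =
      {0..1} \<inter> (\<lambda>s. s - c) -` {u \<in> {-1<..<1}. p u \<in> S}"
    using along by (auto simp: abs_less_iff)
  ultimately show ?thesis
    by (auto intro: openin_open_Int)
qed

section \<open>Arcs through vertices\<close>

lemma continuous_map_join_edges:
  fixes f g :: "real \<Rightarrow> real"
  assumes v: "v \<noteq> []" "set v \<subseteq> A" and w: "w \<noteq> []" "set w \<subseteq> A"
    and f: "continuous_on {-1..0} f" "f ` {-1..0} \<subseteq> {0..1}"
    and g: "continuous_on {0..1} g" "g ` {0..1} \<subseteq> {0..1}"
    and join: "edge_map v (f 0) = edge_map w (g 0)"
  shows "continuous_map (top_of_set {-1..1}) (Ttop A)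
           (\<lambda>u. if u \<le> 0 then edge_map v (f u) else edge_map w (g u))"
proof (rule continuous_map_cases_le[where p = "\<lambda>u. u" and q = "\<lambda>u. 0"])
  have "subtopology (top_of_set {-1..1}) {u \<in> topspace (top_of_set {-1..1}). u \<le> 0} = top_of_set {-1..0::real}"
    by (auto simp: subtopology_subtopology intro!: arg_cong[where f = "top_of_set"])
  moreover have "continuous_map (top_of_set {-1..0}) (top_of_set {0..1}) f"
    using f by (auto simp: continuous_map_in_subtopology)
  ultimately show "continuous_map (subtopology (top_of_set {-1..1})
      {u \<in> topspace (top_of_set {-1..1}). u \<le> 0}) (Ttop A) (\<lambda>u. edge_map v (f u))"
    using continuous_map_compose[of "top_of_set {-1..0}" "top_of_set {0..1}" f "Ttop A" "edge_map v"]
      continuous_map_edge_map[OF v] by (simp add: o_def)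
next
  have "subtopology (top_of_set {-1..1}) {u \<in> topspace (top_of_set {-1..1}). 0 \<le> u} = top_of_set {0..1::real}"
    by (auto simp: subtopology_subtopology intro!: arg_cong[where f = "top_of_set"])
  moreover have "continuous_map (top_of_set {0..1}) (top_of_set {0..1}) g"
    using g by (auto simp: continuous_map_in_subtopology)
  ultimately show "continuous_map (subtopology (top_of_set {-1..1})
      {u \<in> topspace (top_of_set {-1..1}). 0 \<le> u}) (Ttop A) (\<lambda>u. edge_map w (g u))"
    using continuous_map_compose[of "top_of_set {0..1}" "top_of_set {0..1}" g "Ttop A" "edge_map w"]
      continuous_map_edge_map[OF w] by (simp add: o_def)
qed (use join in auto)

definition vertex_arc :: "'a list \<Rightarrow> 'a \<Rightarrow> real \<Rightarrow> 'a list \<times> real" where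
  "vertex_arc w a u = (if u \<le> 0 then edge_map w (1 + u) else edge_map (w @ [a]) u)"

definition vertex_retraction :: "'a list \<Rightarrow> 'a \<Rightarrow> 'a list \<times> real \<Rightarrow> real" where
  "vertex_retraction w a = (\<lambda>(u, s).
     if prefix (w @ [a]) u then (if u = w @ [a] then s else 1)
     else if prefix w u then (if u = w then s - 1 else 0) else -1)"

definition root_arc :: "'a \<Rightarrow> 'a \<Rightarrow> real \<Rightarrow> 'a list \<times> real" where
  "root_arc a b u = (if u \<le> 0 then edge_map [b] (- u) else edge_map [a] u)"

definition root_retraction :: "'a \<Rightarrow> 'a \<Rightarrow> 'a list \<times> real \<Rightarrow> real" where
  "root_retraction a b = (\<lambda>(u, s).
     if prefix [a] u then (if u = [a] then s else 1)
     else if prefix [b] u then (if u = [b] then - s else -1) else 0)"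

lemma retract_arc_vertex_arc:
  assumes w: "w \<noteq> []" "set w \<subseteq> A" and a: "a \<in> A"
  shows "retract_arc A (vertex_arc w a)"
  unfolding retract_arc_def
proof (intro conjI exI)
  show "continuous_map (top_of_set {-1..1}) (Ttop A) (vertex_arc w a)"
    unfolding vertex_arc_def[abs_def] using w a
    by (intro continuous_map_join_edges) (auto intro!: continuous_intros simp: edge_map_def vert_def)
  show "continuous_map (Ttop A) euclideanreal (vertex_retraction w a)"
  proof (rule continuous_map_Ttop_real)
    show "continuous_on {0..1} (\<lambda>s. vertex_retraction w a (v, s))" for v
      by (cases "prefix (w @ [a]) v"; cases "v = w @ [a]"; cases "prefix w v"; cases "v = w")
        (auto simp: vertex_retraction_def intro!: continuous_intros)
    show "vertex_retraction w a (vert u) = vertex_retraction w a (u @ [c], 0)" for u c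
      using w(1) by (cases "u = []") (auto simp: vertex_retraction_def vert_def prefix_Cons neq_Nil_conv)
  qed
  show "\<forall>u\<in>{-1<..<1}. vertex_retraction w a (vertex_arc w a u) = u"
    by (auto simp: vertex_arc_def vertex_retraction_def edge_map_def)
qed

lemma retract_arc_root_arc:
  assumes "a \<in> A" "b \<in> A" "a \<noteq> b"
  shows "retract_arc A (root_arc a b)"
  unfolding retract_arc_def
proof (intro conjI exI)
  show "continuous_map (top_of_set {-1..1}) (Ttop A) (root_arc a b)"
    unfolding root_arc_def[abs_def] using assms
    by (intro continuous_map_join_edges) (auto intro!: continuous_intros simp: edge_map_def)
  show "continuous_map (Ttop A) euclideanreal (root_retraction a b)"
  proof (rule continuous_map_Ttop_real)
    show "continuous_on {0..1} (\<lambda>s. root_retraction a b (v, s))" for v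
      by (cases "prefix [a] v"; cases "v = [a]"; cases "prefix [b] v"; cases "v = [b]")
        (auto simp: root_retraction_def intro!: continuous_intros)
    show "root_retraction a b (vert u) = root_retraction a b (u @ [c], 0)" for u c
      using assms(3) by (cases u) (auto simp: root_retraction_def vert_def)
  qed
  show "\<forall>u\<in>{-1<..<1}. root_retraction a b (root_arc a b u) = u"
    using assms(3) by (auto simp: root_arc_def root_retraction_def edge_map_def vert_def)
qed

lemma openin_edge_vimage_near_top:
  assumes S: "D_open A S" and v: "v \<noteq> []" "set v \<subseteq> A" and a: "a \<in> A"
  shows "openin (top_of_set {0..1}) {s \<in> {0..1}. \<bar>s - 1\<bar> < 1 \<and> edge_map v s \<in> S}"
  using v by (intro openin_edge_vimage_along_arc[OF S retract_arc_vertex_arc[OF v a]])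
    (auto simp: vertex_arc_def edge_map_def)

lemma exists_other_elem_if_card_ge_2:
  assumes "card A \<ge> 2" "c \<in> A"
  obtains b where "b \<in> A" "b \<noteq> c"
proof -
  have "\<not> A \<subseteq> {c}"
    using assms(1) card_mono[of "{c}" A] by auto
  then show ?thesis
    using that by blast
qed

lemma openin_edge_vimage_near_bottom:
  assumes A: "card A \<ge> 2" and S: "D_open A S" and v: "v \<noteq> []" "set v \<subseteq> A"
  shows "openin (top_of_set {0..1}) {s \<in> {0..1}. \<bar>s\<bar> < 1 \<and> edge_map v s \<in> S}"
proof (cases "butlast v = []")
  case False
  with v have arc: "retract_arc A (vertex_arc (butlast v) (last v))"
    by (intro retract_arc_vertex_arc) (auto dest: in_set_butlastD)
  have "vertex_arc (butlast v) (last v) (s - 0) = edge_map v s" if "0 \<le> s" for s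
    using False v(1) that by (auto simp: vertex_arc_def edge_map_def vert_def)
  then have "openin (top_of_set {0..1}) {s \<in> {0..1}. \<bar>s - 0\<bar> < 1 \<and> edge_map v s \<in> S}"
    by (intro openin_edge_vimage_along_arc[OF S arc]) auto
  then show ?thesis
    by simp
next
  case True
  with v obtain c where c: "v = [c]" "c \<in> A"
    by (metis append_butlast_last_id append_Nil list.set_intros(1) subsetD)
  then obtain b where "b \<in> A" "b \<noteq> c"
    using exists_other_elem_if_card_ge_2[OF A] by blast
  with c have arc: "retract_arc A (root_arc c b)"
    by (intro retract_arc_root_arc) auto
  have "root_arc c b (s - 0) = edge_map v s" if "0 \<le> s" for s
    using c(1) that by (auto simp: root_arc_def edge_map_def)
  then have "openin (top_of_set {0..1}) {s \<in> {0..1}. \<bar>s - 0\<bar> < 1 \<and> edge_map v s \<in> S}"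
    by (intro openin_edge_vimage_along_arc[OF S arc]) auto
  then show ?thesis
    by simp
qed

lemma D_open_imp_openin_Ttop:
  assumes A: "card A \<ge> 2" and S: "D_open A S"
  shows "openin (Ttop A) S"
  unfolding openin_Ttop
proof (intro conjI allI impI)
  show "S \<subseteq> Tcar A"
    using S unfolding D_open_def by blast
  fix v :: "'a list"
  assume "v \<noteq> [] \<and> set v \<subseteq> A"
  then have v: "v \<noteq> []" "set v \<subseteq> A"
    by auto
  obtain a where "a \<in> A"
    using A by fastforce
  have "\<bar>s - 1\<bar> < 1 \<or> \<bar>s\<bar> < 1" if "s \<in> {0..1}" for s :: real
    using that by (cases "s = 0") auto
  then have "{s \<in> {0..1}. edge_map v s \<in> S} =
      {s \<in> {0..1}. \<bar>s - 1\<bar> < 1 \<and> edge_map v s \<in> S} \<union> {s \<in> {0..1}. \<bar>s\<bar> < 1 \<and> edge_map v s \<in> S}"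
    by blast
  then show "openin (top_of_set {0..1}) {s \<in> {0..1}. edge_map v s \<in> S}"
    using openin_Un[OF openin_edge_vimage_near_top[OF S v \<open>a \<in> A\<close>] openin_edge_vimage_near_bottom[OF A S v]]
    by (simp only:)
qed

theorem mainTheorem1:
  fixes A :: "'a set"
  assumes "finite A" and "card A \<ge> 2"
  shows "D_topology A = Ttop A"
  unfolding topology_eq openin_D_topology
  using openin_Ttop_imp_D_open D_open_imp_openin_Ttop[OF assms(2)] by blast

end
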